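(* Let $U,U_1$ be open subsets of $\mathbb{R}^n$ with $\overline{U_1}$ compact and contained in $U$. Then for every $(u_\varepsilon)_\varepsilon\in\mathcal{E}_{M,co}(U)$ there exists $(v_\varepsilon)_\varepsilon\in\mathcal{E}_{M,sm}(U_1)$ such that $(u_\varepsilon|_{U_1}-v_\varepsilon)_\varepsilon\in\mathcal{N}_{co}(U_1)$.
   Context: Let $I=(0,1]$, $\mathbb{K}\in\{\mathbb{R},\mathbb{C}\}$. For open $V\subseteq\mathbb{R}^n$, $\mathcal{E}_{M,co}(V)$ is the set of nets $(u_\varepsilon)_{\varepsilon\in I}$ of smooth functions $V\to\mathbb{K}$ such that $(\varepsilon,x)\mapsto\partial^\alpha u_\varepsilon(x)$ is continuous on $I\times V$ for all multi-indices $\alpha$, and such that for every compact $K\subseteq V$ and every $\alpha$ there is $N\in\mathbb{N}$ with $\sup_{x\in K}|\partial^\alpha u_\varepsilon(x)|=O(\varepsilon^{-N})$ as $\varepsilon\to0$. $\mathcal{N}_{co}(V)$ is the set of such continuously parametrized nets with $\sup_{x\in K}|\partial^\alpha u_\varepsilon(x)|=O(\varepsilon^{m})$ for all compact $K$, all $\alpha$, all $m\in\mathbb{N}$. $\mathcal{E}_{M,sm}(V)$ is defined like $\mathcal{E}_{M,co}(V)$ but requiring $(\varepsilon,x)\mapsto u_\varepsilon(x)$ to be smooth on $I\times V$. *)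

theory Defs
  imports "HOL-Analysis.Analysis"
begin

text \<open>Directional derivative of f along v at x, relative to the domain S
  (for open S this is the ordinary directional derivative; at boundary points
  of non-open S it is the one-sided derivative within S).\<close>
definition dderiv :: "'a::real_normed_vector set \<Rightarrow> 'a \<Rightarrow> ('a \<Rightarrow> 'k::real_normed_vector) \<Rightarrow> 'a \<Rightarrow> 'k" where
  "dderiv S v f x = vector_derivative (\<lambda>t. f (x + t *\<^sub>R v)) (at 0 within {t. x + t *\<^sub>R v \<in> S})"

text \<open>Iterated directional derivatives along a list of directions
  (a multi-index is represented by a list of basis directions).\<close>
fun pderivs :: "'a::real_normed_vector set \<Rightarrow> 'a list \<Rightarrow> ('a \<Rightarrow> 'k::real_normed_vector) \<Rightarrow> 'a \<Rightarrow> 'k" where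
  "pderivs S [] f = f"
| "pderivs S (v # vs) f = dderiv S v (pderivs S vs f)"

definition smooth_on_dom :: "'a::euclidean_space set \<Rightarrow> ('a \<Rightarrow> 'k::real_normed_vector) \<Rightarrow> bool" where
  "smooth_on_dom S f \<longleftrightarrow>
     (\<forall>vs. set vs \<subseteq> Basis \<longrightarrow>
        continuous_on S (pderivs S vs f) \<and>
        (\<forall>v\<in>Basis. \<forall>x\<in>S. (\<lambda>t. pderivs S vs f (x + t *\<^sub>R v)) differentiable (at 0 within {t. x + t *\<^sub>R v \<in> S})))"

definition Ipar :: "real set" where "Ipar = {0<..1}"

definition co_net :: "'a::euclidean_space set \<Rightarrow> (real \<Rightarrow> 'a \<Rightarrow> 'k::real_normed_vector) \<Rightarrow> bool" where
  "co_net V u \<longleftrightarrow>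
     (\<forall>\<epsilon>\<in>Ipar. smooth_on_dom V (u \<epsilon>)) \<and>
     (\<forall>\<alpha>. set \<alpha> \<subseteq> Basis \<longrightarrow>
        continuous_on (Ipar \<times> V) (\<lambda>p. pderivs V \<alpha> (u (fst p)) (snd p)))"

definition moderate :: "'a::euclidean_space set \<Rightarrow> (real \<Rightarrow> 'a \<Rightarrow> 'k::real_normed_vector) \<Rightarrow> bool" where
  "moderate V u \<longleftrightarrow>
     (\<forall>K \<alpha>. compact K \<and> K \<subseteq> V \<and> set \<alpha> \<subseteq> Basis \<longrightarrow>
        (\<exists>N::nat. \<exists>C \<eta>. 0 < \<eta> \<and> \<eta> \<le> 1 \<and>
           (\<forall>\<epsilon>\<in>{0<..\<eta>}. \<forall>x\<in>K. norm (pderivs V \<alpha> (u \<epsilon>) x) \<le> C * (1 / \<epsilon>) ^ N)))"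

definition negligible_net :: "'a::euclidean_space set \<Rightarrow> (real \<Rightarrow> 'a \<Rightarrow> 'k::real_normed_vector) \<Rightarrow> bool" where
  "negligible_net V u \<longleftrightarrow>
     (\<forall>K \<alpha> (m::nat). compact K \<and> K \<subseteq> V \<and> set \<alpha> \<subseteq> Basis \<longrightarrow>
        (\<exists>C \<eta>. 0 < \<eta> \<and> \<eta> \<le> 1 \<and>
           (\<forall>\<epsilon>\<in>{0<..\<eta>}. \<forall>x\<in>K. norm (pderivs V \<alpha> (u \<epsilon>) x) \<le> C * \<epsilon> ^ m)))"

definition EM_co :: "'a::euclidean_space set \<Rightarrow> (real \<Rightarrow> 'a \<Rightarrow> 'k::real_normed_vector) set" where
  "EM_co V = {u. co_net V u \<and> moderate V u}"

definition N_co :: "'a::euclidean_space set \<Rightarrow> (real \<Rightarrow> 'a \<Rightarrow> 'k::real_normed_vector) set" where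
  "N_co V = {u. co_net V u \<and> negligible_net V u}"

text \<open>Smooth parametrization: (eps,x) \<mapsto> u eps x smooth on I \<times> V (one-sided in eps at eps = 1).\<close>
definition EM_sm :: "'a::euclidean_space set \<Rightarrow> (real \<Rightarrow> 'a \<Rightarrow> 'k::real_normed_vector) set" where
  "EM_sm V = {u. co_net V u \<and> moderate V u \<and>
                 smooth_on_dom (Ipar \<times> V) (\<lambda>p. u (fst p) (snd p))}"

end

theory Submission
  imports Defs "HOL-Computational_Algebra.Polynomial"
begin

text \<open>
  Choose a grid 1 = t_0 > t_1 > ... tending to 0 and, for t_{n+1} < \<epsilon> \<le> t_n, let v_\<epsilon> be the
  convex combination of u_{t_n} and u_{t_{n+1}} whose weight is a smooth step function of \<epsilon> that
  is 1 near t_n and 0 near t_{n+1}. Locally v is then of the form a(\<epsilon>) w_1(x) + b(\<epsilon>) w_2(x)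
  with smooth a, b, w_1, w_2, hence smooth in (\<epsilon>, x). The steps are chosen so small, by uniform
  continuity of the x-derivatives of u on compact subsets of I \<times> U, that on the dyadic band
  (2^-(k+1), 2^-k] the derivatives of order at most k of u vary by at most (2^-(k+2))^k \<le> \<epsilon>^k
  across a grid interval, uniformly on U1. As v_\<epsilon> is a convex combination, every derivative of
  u_\<epsilon> - v_\<epsilon> is then O(\<epsilon>^m) for every m, and v inherits moderateness from u.
\<close>

section \<open>Smooth functions of one real variable\<close>

fun n_times_differentiable :: "nat \<Rightarrow> (real \<Rightarrow> real) \<Rightarrow> bool" where
  "n_times_differentiable 0 f = True"
| "n_times_differentiable (Suc n) f \<longleftrightarrow> (\<forall>x. f differentiable (at x)) \<and> n_times_differentiable n (deriv f)"

definition smooth_real :: "(real \<Rightarrow> real) \<Rightarrow> bool" where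
  "smooth_real f \<longleftrightarrow> (\<forall>n. n_times_differentiable n f)"

lemma n_times_differentiable_SucD: "n_times_differentiable (Suc n) f \<Longrightarrow> n_times_differentiable n f"
  by (induction n arbitrary: f) auto

lemma deriv_eqI: "(\<And>x. DERIV f x :> f' x) \<Longrightarrow> deriv f = f'"
  using DERIV_imp_deriv by blast

lemma n_times_differentiable_const: "n_times_differentiable n (\<lambda>x. c)"
proof (induction n arbitrary: c)
  case (Suc n)
  have "deriv (\<lambda>x::real. c) = (\<lambda>x. 0)" by (rule deriv_eqI) auto
  then show ?case using Suc by auto
qed simp

lemma n_times_differentiable_add:
  "n_times_differentiable n f \<Longrightarrow> n_times_differentiable n g \<Longrightarrow> n_times_differentiable n (\<lambda>x. f x + g x)"
proof (induction n arbitrary: f g)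
  case (Suc n)
  then have df: "\<And>x. f differentiable (at x)" and dg: "\<And>x. g differentiable (at x)" by auto
  have "deriv (\<lambda>x. f x + g x) = (\<lambda>x. deriv f x + deriv g x)"
    by (rule deriv_eqI)
       (use df dg in \<open>auto intro!: derivative_eq_intros simp: DERIV_deriv_iff_real_differentiable[symmetric]\<close>)
  then show ?case using Suc df dg by auto
qed simp

lemma n_times_differentiable_mult:
  "n_times_differentiable n f \<Longrightarrow> n_times_differentiable n g \<Longrightarrow> n_times_differentiable n (\<lambda>x. f x * g x)"
proof (induction n arbitrary: f g)
  case (Suc n)
  then have df: "\<And>x. f differentiable (at x)" and dg: "\<And>x. g differentiable (at x)" by auto
  have "deriv (\<lambda>x. f x * g x) = (\<lambda>x. deriv f x * g x + f x * deriv g x)"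
    by (rule deriv_eqI)
       (use df dg in \<open>auto intro!: derivative_eq_intros simp: DERIV_deriv_iff_real_differentiable[symmetric]\<close>)
  moreover have "n_times_differentiable n (\<lambda>x. deriv f x * g x + f x * deriv g x)"
    using Suc n_times_differentiable_SucD by (intro n_times_differentiable_add) auto
  ultimately show ?case using df dg by auto
qed simp

lemma DERIV_affine_comp:
  fixes f :: "real \<Rightarrow> real"
  assumes "f differentiable (at (c * x + d))"
  shows "DERIV (\<lambda>t. f (c * t + d)) x :> c * deriv f (c * x + d)"
proof -
  have f': "DERIV f (c * x + d) :> deriv f (c * x + d)"
    using assms DERIV_deriv_iff_real_differentiable by blast
  have "DERIV (\<lambda>t. c * t + d) x :> c" by (auto intro!: derivative_eq_intros)
  from DERIV_chain2[OF f' this] show ?thesis by (simp add: mult.commute)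
qed

lemma n_times_differentiable_affine:
  "n_times_differentiable n f \<Longrightarrow> n_times_differentiable n (\<lambda>t. f (c * t + d))"
proof (induction n arbitrary: f)
  case (Suc n)
  then have df: "\<And>x. f differentiable (at x)" by auto
  have "deriv (\<lambda>t. f (c * t + d)) = (\<lambda>t. c * deriv f (c * t + d))"
    by (rule deriv_eqI) (use df DERIV_affine_comp in blast)
  moreover have "\<forall>x. (\<lambda>t. f (c * t + d)) differentiable (at x)"
    using DERIV_affine_comp df real_differentiable_def by blast
  moreover have "n_times_differentiable n (\<lambda>t. c * deriv f (c * t + d))"
    using Suc by (intro n_times_differentiable_mult n_times_differentiable_const) auto
  ultimately show ?case by auto
qed simp

lemma n_times_differentiable_inverse:
  "n_times_differentiable n f \<Longrightarrow> (\<And>x. f x \<noteq> 0) \<Longrightarrow> n_times_differentiable n (\<lambda>x. inverse (f x))"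
proof (induction n arbitrary: f)
  case (Suc n)
  then have df: "\<And>x. f differentiable (at x)" by auto
  have D: "DERIV (\<lambda>x. inverse (f x)) x :> - deriv f x * (inverse (f x) * inverse (f x))" for x
    using df[of x] Suc.prems(2)[of x]
    by (auto intro!: derivative_eq_intros simp: DERIV_deriv_iff_real_differentiable[symmetric])
  have inv: "n_times_differentiable n (\<lambda>x. inverse (f x))"
    using Suc n_times_differentiable_SucD by blast
  have "n_times_differentiable n (\<lambda>x. (-1) * deriv f x * (inverse (f x) * inverse (f x)))"
    using Suc.prems(1)
    by (intro n_times_differentiable_mult n_times_differentiable_const inv) auto
  moreover have "deriv (\<lambda>x. inverse (f x)) = (\<lambda>x. - deriv f x * (inverse (f x) * inverse (f x)))"
    by (rule deriv_eqI) (rule D)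
  ultimately show ?case using D real_differentiable_def by auto
qed simp

definition flat_poly_exp :: "real poly \<Rightarrow> real \<Rightarrow> real" where
  "flat_poly_exp p t = (if t > 0 then poly p (inverse t) * exp (- inverse t) else 0)"

definition flat_deriv_poly :: "real poly \<Rightarrow> real poly" where
  "flat_deriv_poly p = [:0, 0, 1:] * (p - pderiv p)"

lemma poly_times_exp_neg_tendsto_0:
  fixes p :: "real poly"
  shows "((\<lambda>s. poly p s * exp (- s)) \<longlongrightarrow> 0) at_top"
proof -
  have eq: "poly p s * exp (- s) = (\<Sum>i\<le>degree p. coeff p i * (s ^ i / exp s))" for s
    by (simp add: poly_altdef exp_minus sum_distrib_right divide_inverse mult.assoc)
  have "((\<lambda>s. \<Sum>i\<le>degree p. coeff p i * (s ^ i / exp s)) \<longlongrightarrow> (\<Sum>i\<le>degree p. coeff p i * 0)) at_top"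
    by (intro tendsto_intros tendsto_power_div_exp_0)
  then show ?thesis by (simp add: eq)
qed

lemma DERIV_flat_poly_exp_0: "DERIV (flat_poly_exp p) 0 :> 0"
proof -
  have "((\<lambda>h. flat_poly_exp p h / h) \<longlongrightarrow> 0) (at_left 0)"
    by (rule tendsto_eventually) (auto simp: eventually_at_left_field flat_poly_exp_def intro: exI[of _ "-1"])
  moreover have "((\<lambda>h. flat_poly_exp p h / h) \<longlongrightarrow> 0) (at_right 0)"
  proof (rule Lim_transform_eventually)
    show "((\<lambda>h. poly (pCons 0 p) (inverse h) * exp (- inverse h)) \<longlongrightarrow> 0) (at_right 0)"
      by (rule filterlim_compose[OF poly_times_exp_neg_tendsto_0 filterlim_inverse_at_top_right])
    show "\<forall>\<^sub>F h in at_right 0. poly (pCons 0 p) (inverse h) * exp (- inverse h) = flat_poly_exp p h / h"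
      by (simp add: eventually_at_right_field flat_poly_exp_def field_simps) (auto intro: exI[of _ 1])
  qed
  ultimately have "((\<lambda>h. flat_poly_exp p h / h) \<longlongrightarrow> 0) (at 0)"
    by (rule filterlim_split_at)
  then show ?thesis by (simp add: DERIV_def flat_poly_exp_def)
qed

lemma DERIV_flat_poly_exp: "DERIV (flat_poly_exp p) t :> flat_poly_exp (flat_deriv_poly p) t"
proof (cases t "0::real" rule: linorder_cases)
  case less
  have "DERIV (\<lambda>t. 0) t :> 0" by simp
  then have "DERIV (flat_poly_exp p) t :> 0"
    by (rule has_field_derivative_transform_within_open[of _ _ _ "{..<0}"]) (use less in \<open>auto simp: flat_poly_exp_def\<close>)
  then show ?thesis using less by (simp add: flat_poly_exp_def)
next
  case equal
  then show ?thesis using DERIV_flat_poly_exp_0 by (simp add: flat_poly_exp_def)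
next
  case greater
  have "DERIV (\<lambda>t. poly p (inverse t) * exp (- inverse t)) t :> flat_poly_exp (flat_deriv_poly p) t"
    using greater
    by (auto intro!: derivative_eq_intros simp: flat_poly_exp_def flat_deriv_poly_def algebra_simps power2_eq_square)
  then show ?thesis
    by (rule has_field_derivative_transform_within_open[of _ _ _ "{0<..}"]) (use greater in \<open>auto simp: flat_poly_exp_def\<close>)
qed

lemma n_times_differentiable_flat_poly_exp: "n_times_differentiable n (flat_poly_exp p)"
proof (induction n arbitrary: p)
  case (Suc n)
  have "deriv (flat_poly_exp p) = flat_poly_exp (flat_deriv_poly p)"
    by (rule deriv_eqI) (rule DERIV_flat_poly_exp)
  then show ?case using Suc DERIV_flat_poly_exp real_differentiable_def by auto
qed simp

definition smooth_step :: "real \<Rightarrow> real" where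
  "smooth_step t = flat_poly_exp 1 (t - 1/3) / (flat_poly_exp 1 (t - 1/3) + flat_poly_exp 1 (2/3 - t))"

lemma flat_poly_exp_1: "flat_poly_exp 1 t = (if t > 0 then exp (- inverse t) else 0)"
  by (simp add: flat_poly_exp_def)

lemma smooth_step_denominator_pos: "flat_poly_exp 1 (t - 1/3) + flat_poly_exp 1 (2/3 - t) > 0"
  by (cases "t > 1/3") (auto simp: flat_poly_exp_1 add_pos_nonneg add_nonneg_pos)

lemma smooth_real_smooth_step: "smooth_real smooth_step"
  unfolding smooth_real_def
proof
  fix n
  have a: "n_times_differentiable n (\<lambda>t. flat_poly_exp 1 (t - 1/3))"
    using n_times_differentiable_affine[OF n_times_differentiable_flat_poly_exp, of n 1 1 "-1/3"] by simp
  have b: "n_times_differentiable n (\<lambda>t. flat_poly_exp 1 (2/3 - t))"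
    using n_times_differentiable_affine[OF n_times_differentiable_flat_poly_exp, of n 1 "-1" "2/3"] by simp
  have c: "n_times_differentiable n (\<lambda>t. inverse (flat_poly_exp 1 (t - 1/3) + flat_poly_exp 1 (2/3 - t)))"
  proof (intro n_times_differentiable_inverse n_times_differentiable_add a b)
    show "flat_poly_exp 1 (t - 1/3) + flat_poly_exp 1 (2/3 - t) \<noteq> 0" for t
      using smooth_step_denominator_pos[of t] by linarith
  qed
  have "smooth_step = (\<lambda>t. flat_poly_exp 1 (t - 1/3) * inverse (flat_poly_exp 1 (t - 1/3) + flat_poly_exp 1 (2/3 - t)))"
    by (rule ext) (simp only: smooth_step_def divide_inverse)
  with n_times_differentiable_mult[OF a c] show "n_times_differentiable n smooth_step"
    by (simp only:)
qed

lemma smooth_step_eq_0: "t \<le> 1/3 \<Longrightarrow> smooth_step t = 0"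
  by (simp add: smooth_step_def flat_poly_exp_1)

lemma smooth_step_eq_1: "t \<ge> 2/3 \<Longrightarrow> smooth_step t = 1"
  using smooth_step_denominator_pos[of t] by (simp add: smooth_step_def flat_poly_exp_1)

lemma smooth_step_bounds: "0 \<le> smooth_step t" "smooth_step t \<le> 1"
proof -
  have nonneg: "0 \<le> flat_poly_exp 1 s" for s by (simp add: flat_poly_exp_1)
  show "0 \<le> smooth_step t"
    using smooth_step_denominator_pos[of t] nonneg[of "t - 1/3"] by (simp add: smooth_step_def)
  show "smooth_step t \<le> 1"
    using smooth_step_denominator_pos[of t] nonneg[of "2/3 - t"] by (simp add: smooth_step_def)
qed

lemma smooth_real_deriv: "smooth_real f \<Longrightarrow> smooth_real (deriv f)"
  unfolding smooth_real_def by (metis n_times_differentiable.simps(2))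

lemma smooth_real_deriv_iter: "smooth_real f \<Longrightarrow> smooth_real ((deriv ^^ j) f)"
  by (induction j) (auto intro: smooth_real_deriv)

lemma smooth_real_differentiable: "smooth_real f \<Longrightarrow> f differentiable (at x)"
  unfolding smooth_real_def by (metis n_times_differentiable.simps(2))

lemma DERIV_deriv_iter: "smooth_real f \<Longrightarrow> DERIV ((deriv ^^ j) f) x :> (deriv ^^ Suc j) f x"
  using smooth_real_differentiable[OF smooth_real_deriv_iter[of f j]] DERIV_deriv_iff_real_differentiable
  by auto

lemma smooth_real_affine: "smooth_real f \<Longrightarrow> smooth_real (\<lambda>t. f (c * t + d))"
  unfolding smooth_real_def using n_times_differentiable_affine by blast

lemma smooth_real_const: "smooth_real (\<lambda>t. c)"
  unfolding smooth_real_def using n_times_differentiable_const by blast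

lemma smooth_real_one_minus: "smooth_real f \<Longrightarrow> smooth_real (\<lambda>t. 1 - f t)"
proof -
  assume "smooth_real f"
  then have "n_times_differentiable n (\<lambda>t. 1 + (-1) * f t)" for n
    unfolding smooth_real_def
    by (intro n_times_differentiable_add n_times_differentiable_mult n_times_differentiable_const) auto
  then show ?thesis unfolding smooth_real_def by simp
qed

section \<open>Iterated directional derivatives\<close>

lemma has_vector_derivative_scaleR_const:
  "(f has_vector_derivative D) (at x within s) \<Longrightarrow>
    ((\<lambda>t. a *\<^sub>R f t) has_vector_derivative a *\<^sub>R D) (at x within s)"
  using has_vector_derivative_scaleR[OF DERIV_const] by fastforce

lemma derivative_cong_near_0:
  fixes f g :: "real \<Rightarrow> 'b::real_normed_vector"
  assumes "0 \<in> T" "r > 0" "\<And>t. t \<in> T \<Longrightarrow> \<bar>t\<bar> < r \<Longrightarrow> f t = g t"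
  shows vector_derivative_cong_near_0: "vector_derivative f (at 0 within T) = vector_derivative g (at 0 within T)"
    and differentiable_cong_near_0: "f differentiable (at 0 within T) \<longleftrightarrow> g differentiable (at 0 within T)"
proof -
  have iff: "(f has_derivative L) (at 0 within T) \<longleftrightarrow> (g has_derivative L) (at 0 within T)" for L
    using has_derivative_transform_within[OF _ assms(2,1), of f L g]
      has_derivative_transform_within[OF _ assms(2,1), of g L f] assms(3)
    by (auto simp: dist_real_def)
  then show "vector_derivative f (at 0 within T) = vector_derivative g (at 0 within T)"
    by (simp add: vector_derivative_def has_vector_derivative_def)
  show "f differentiable (at 0 within T) \<longleftrightarrow> g differentiable (at 0 within T)"
    using iff by (simp add: differentiable_def)
qed

lemma open_contains_line_near:
  fixes q d :: "'a::real_normed_vector"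
  assumes "open W" "q \<in> W"
  obtains r where "r > 0" "\<And>t. \<bar>t\<bar> < r \<Longrightarrow> q + t *\<^sub>R d \<in> W"
proof -
  have "open {t::real. q + t *\<^sub>R d \<in> W}"
    using assms(1) by (intro open_vimage[of _ "\<lambda>t. q + t *\<^sub>R d", unfolded vimage_def]) (auto intro!: continuous_intros)
  moreover have "0 \<in> {t::real. q + t *\<^sub>R d \<in> W}" using assms(2) by simp
  ultimately obtain r where "r > 0" "ball 0 r \<subseteq> {t::real. q + t *\<^sub>R d \<in> W}"
    by (rule openE)
  then show ?thesis using that by (force simp: subset_iff dist_real_def)
qed

lemma at_within_line_open:
  fixes x v :: "'a::real_normed_vector"
  assumes "open V" "x \<in> V"
  shows "at 0 within {t. x + t *\<^sub>R v \<in> V} = at 0"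
proof (rule at_within_open)
  show "open {t::real. x + t *\<^sub>R v \<in> V}"
    using assms(1) by (intro open_vimage[of _ "\<lambda>t. x + t *\<^sub>R v", unfolded vimage_def]) (auto intro!: continuous_intros)
qed (use assms(2) in simp)

lemma dderiv_open:
  "open V \<Longrightarrow> x \<in> V \<Longrightarrow> dderiv V v f x = vector_derivative (\<lambda>t. f (x + t *\<^sub>R v)) (at 0)"
  by (simp add: dderiv_def at_within_line_open)

lemma pderivs_cong_open:
  assumes "open W" "\<And>q. q \<in> S \<Longrightarrow> q \<in> W \<Longrightarrow> f q = g q"
  shows "q \<in> S \<Longrightarrow> q \<in> W \<Longrightarrow> pderivs S \<alpha> f q = pderivs S \<alpha> g q"
proof (induction \<alpha> arbitrary: q)
  case (Cons d \<alpha>)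
  obtain r where "r > 0" "\<And>t. \<bar>t\<bar> < r \<Longrightarrow> q + t *\<^sub>R d \<in> W"
    using open_contains_line_near[OF assms(1) Cons.prems(2)] by blast
  then show ?case unfolding pderivs.simps dderiv_def
    by (intro vector_derivative_cong_near_0) (use Cons in auto)
qed (use assms in simp)

lemma smooth_on_dom_localI:
  fixes f :: "'a::euclidean_space \<Rightarrow> 'b::real_normed_vector"
  assumes "\<And>q. q \<in> S \<Longrightarrow> \<exists>W G. open W \<and> q \<in> W \<and> smooth_on_dom S G \<and> (\<forall>p\<in>S. p \<in> W \<longrightarrow> f p = G p)"
  shows "smooth_on_dom S f"
  unfolding smooth_on_dom_def
proof (intro allI impI conjI ballI)
  fix vs :: "'a list" assume vs: "set vs \<subseteq> Basis"
  show "continuous_on S (pderivs S vs f)"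
    unfolding continuous_on_eq_continuous_within
  proof
    fix q assume q: "q \<in> S"
    obtain W G where WG: "open W" "q \<in> W" "smooth_on_dom S G" "\<forall>p\<in>S. p \<in> W \<longrightarrow> f p = G p"
      using assms[OF q] by blast
    obtain \<rho> where \<rho>: "\<rho> > 0" "ball q \<rho> \<subseteq> W" using WG openE by blast
    have "continuous (at q within S) (pderivs S vs G)"
      using WG(3) vs q unfolding smooth_on_dom_def continuous_on_eq_continuous_within by blast
    then show "continuous (at q within S) (pderivs S vs f)"
      by (rule continuous_transform_within[OF _ \<rho>(1) q])
         (use \<rho> pderivs_cong_open[OF WG(1), of S G f] WG(4) in \<open>auto simp: dist_commute subset_iff\<close>)
  qed
  fix v x :: 'a assume v: "v \<in> Basis" and x: "x \<in> S"
  obtain W G where WG: "open W" "x \<in> W" "smooth_on_dom S G" "\<forall>p\<in>S. p \<in> W \<longrightarrow> f p = G p"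
    using assms[OF x] by blast
  obtain r where r: "r > 0" "\<And>t. \<bar>t\<bar> < r \<Longrightarrow> x + t *\<^sub>R v \<in> W"
    using open_contains_line_near[OF WG(1,2)] by blast
  have "(\<lambda>t. pderivs S vs G (x + t *\<^sub>R v)) differentiable (at 0 within {t. x + t *\<^sub>R v \<in> S})"
    using WG(3) vs v x unfolding smooth_on_dom_def by blast
  then show "(\<lambda>t. pderivs S vs f (x + t *\<^sub>R v)) differentiable (at 0 within {t. x + t *\<^sub>R v \<in> S})"
    by (subst differentiable_cong_near_0[OF _ r(1)])
       (use x r pderivs_cong_open[OF WG(1), of S f G] WG(4) in auto)
qed

lemma smooth_on_dom_differentiable_at:
  fixes f :: "'a::euclidean_space \<Rightarrow> 'b::real_normed_vector"
  assumes "open V" "smooth_on_dom V f" "set vs \<subseteq> Basis" "v \<in> Basis" "x \<in> V"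
  shows "(\<lambda>t. pderivs V vs f (x + t *\<^sub>R v)) differentiable (at 0)"
proof -
  have "(\<lambda>t. pderivs V vs f (x + t *\<^sub>R v)) differentiable (at 0 within {t. x + t *\<^sub>R v \<in> V})"
    using assms unfolding smooth_on_dom_def by blast
  then show ?thesis by (simp add: at_within_line_open[OF assms(1,5)])
qed

lemma pderivs_open_subset:
  assumes "open V1" "V1 \<subseteq> V" "open V"
  shows "x \<in> V1 \<Longrightarrow> pderivs V \<alpha> f x = pderivs V1 \<alpha> f x"
proof (induction \<alpha> arbitrary: x)
  case (Cons d \<alpha>)
  obtain r where r: "r > 0" "\<And>t. \<bar>t\<bar> < r \<Longrightarrow> x + t *\<^sub>R d \<in> V1"
    using open_contains_line_near[OF assms(1) Cons.prems] by blast
  have "vector_derivative (\<lambda>t. pderivs V \<alpha> f (x + t *\<^sub>R d)) (at 0)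
      = vector_derivative (\<lambda>t. pderivs V1 \<alpha> f (x + t *\<^sub>R d)) (at 0)"
    by (rule vector_derivative_cong_near_0[OF _ r(1)]) (use Cons.IH r in auto)
  moreover have "x \<in> V" using Cons.prems assms(2) by blast
  ultimately show ?case
    using Cons.prems assms by (simp add: dderiv_open)
qed simp

lemma smooth_on_dom_open_subset:
  fixes f :: "'a::euclidean_space \<Rightarrow> 'b::real_normed_vector"
  assumes "open V1" "V1 \<subseteq> V" "open V" "smooth_on_dom V f"
  shows "smooth_on_dom V1 f"
  unfolding smooth_on_dom_def
proof (intro allI impI conjI ballI)
  fix vs :: "'a list" assume vs: "set vs \<subseteq> Basis"
  have "continuous_on V1 (pderivs V vs f)"
    using assms vs unfolding smooth_on_dom_def by (meson continuous_on_subset)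
  then show "continuous_on V1 (pderivs V1 vs f)"
    by (rule continuous_on_eq) (use pderivs_open_subset[OF assms(1-3)] in auto)
  fix v x :: 'a assume v: "v \<in> Basis" and x: "x \<in> V1"
  obtain r where r: "r > 0" "\<And>t. \<bar>t\<bar> < r \<Longrightarrow> x + t *\<^sub>R v \<in> V1"
    using open_contains_line_near[OF assms(1) x] by blast
  have "(\<lambda>t. pderivs V vs f (x + t *\<^sub>R v)) differentiable (at 0)"
    using smooth_on_dom_differentiable_at[OF assms(3,4) vs v] x assms(2) by blast
  then have "(\<lambda>t. pderivs V1 vs f (x + t *\<^sub>R v)) differentiable (at 0)"
    by (subst (asm) differentiable_cong_near_0[OF _ r(1), where g = "\<lambda>t. pderivs V1 vs f (x + t *\<^sub>R v)"])
       (use r pderivs_open_subset[OF assms(1-3)] in auto)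
  then show "(\<lambda>t. pderivs V1 vs f (x + t *\<^sub>R v)) differentiable (at 0 within {t. x + t *\<^sub>R v \<in> V1})"
    by (simp add: at_within_line_open[OF assms(1) x])
qed

lemma pderivs_lincomb:
  fixes f g :: "'a::euclidean_space \<Rightarrow> 'b::real_normed_vector"
  assumes "open V" "smooth_on_dom V f" "smooth_on_dom V g" "set \<alpha> \<subseteq> Basis"
  shows "x \<in> V \<Longrightarrow> pderivs V \<alpha> (\<lambda>x. a *\<^sub>R f x + b *\<^sub>R g x) x = a *\<^sub>R pderivs V \<alpha> f x + b *\<^sub>R pderivs V \<alpha> g x"
  using assms(4)
proof (induction \<alpha> arbitrary: x)
  case (Cons d \<alpha>)
  have d: "d \<in> Basis" and \<alpha>: "set \<alpha> \<subseteq> Basis" using Cons.prems by auto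
  obtain r where r: "r > 0" "\<And>t. \<bar>t\<bar> < r \<Longrightarrow> x + t *\<^sub>R d \<in> V"
    using open_contains_line_near[OF assms(1) Cons.prems(1)] by blast
  let ?f = "\<lambda>t. pderivs V \<alpha> f (x + t *\<^sub>R d)" and ?g = "\<lambda>t. pderivs V \<alpha> g (x + t *\<^sub>R d)"
  have "((\<lambda>t. a *\<^sub>R ?f t + b *\<^sub>R ?g t) has_vector_derivative
      a *\<^sub>R vector_derivative ?f (at 0) + b *\<^sub>R vector_derivative ?g (at 0)) (at 0)"
    using smooth_on_dom_differentiable_at[OF assms(1,2) \<alpha> d Cons.prems(1)]
      smooth_on_dom_differentiable_at[OF assms(1,3) \<alpha> d Cons.prems(1)]
    by (intro has_vector_derivative_add has_vector_derivative_scaleR_const)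
       (auto simp: vector_derivative_works)
  moreover have "vector_derivative (\<lambda>t. pderivs V \<alpha> (\<lambda>x. a *\<^sub>R f x + b *\<^sub>R g x) (x + t *\<^sub>R d)) (at 0)
      = vector_derivative (\<lambda>t. a *\<^sub>R ?f t + b *\<^sub>R ?g t) (at 0)"
    by (rule vector_derivative_cong_near_0[OF _ r(1)]) (use Cons.IH r \<alpha> in auto)
  ultimately show ?case
    using Cons.prems assms by (simp add: dderiv_open vector_derivative_at)
qed simp

lemma smooth_on_dom_lincomb:
  fixes f g :: "'a::euclidean_space \<Rightarrow> 'b::real_normed_vector"
  assumes "open V" "smooth_on_dom V f" "smooth_on_dom V g"
  shows "smooth_on_dom V (\<lambda>x. a *\<^sub>R f x + b *\<^sub>R g x)"
  unfolding smooth_on_dom_def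
proof (intro allI impI conjI ballI)
  fix vs :: "'a list" assume vs: "set vs \<subseteq> Basis"
  have "continuous_on V (\<lambda>x. a *\<^sub>R pderivs V vs f x + b *\<^sub>R pderivs V vs g x)"
    using assms vs unfolding smooth_on_dom_def by (intro continuous_intros) auto
  then show "continuous_on V (pderivs V vs (\<lambda>x. a *\<^sub>R f x + b *\<^sub>R g x))"
    by (rule continuous_on_eq) (use pderivs_lincomb[OF assms vs] in auto)
  fix v x :: 'a assume v: "v \<in> Basis" and x: "x \<in> V"
  obtain r where r: "r > 0" "\<And>t. \<bar>t\<bar> < r \<Longrightarrow> x + t *\<^sub>R v \<in> V"
    using open_contains_line_near[OF assms(1) x] by blast
  have "(\<lambda>t. a *\<^sub>R pderivs V vs f (x + t *\<^sub>R v) + b *\<^sub>R pderivs V vs g (x + t *\<^sub>R v)) differentiable (at 0)"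
    using smooth_on_dom_differentiable_at[OF assms(1,2) vs v x] smooth_on_dom_differentiable_at[OF assms(1,3) vs v x]
    by (intro differentiable_add differentiable_scaleR differentiable_const) auto
  then have "(\<lambda>t. pderivs V vs (\<lambda>x. a *\<^sub>R f x + b *\<^sub>R g x) (x + t *\<^sub>R v)) differentiable (at 0)"
    by (subst differentiable_cong_near_0[OF _ r(1)]) (use r pderivs_lincomb[OF assms vs] in auto)
  then show "(\<lambda>t. pderivs V vs (\<lambda>x. a *\<^sub>R f x + b *\<^sub>R g x) (x + t *\<^sub>R v)) differentiable (at 0 within {t. x + t *\<^sub>R v \<in> V})"
    by (simp add: at_within_line_open[OF assms(1) x])
qed

lemma pderivs_Times_snd:
  fixes G :: "real \<times> 'a::real_normed_vector \<Rightarrow> 'b::real_normed_vector"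
  assumes "e \<in> A"
  shows "x \<in> V \<Longrightarrow> pderivs (A \<times> V) (map (\<lambda>b. (0, b)) \<alpha>) G (e, x) = pderivs V \<alpha> (\<lambda>y. G (e, y)) x"
proof (induction \<alpha> arbitrary: x)
  case (Cons b \<alpha>)
  have "{t. (e, x) + t *\<^sub>R (0, b) \<in> A \<times> V} = {t. x + t *\<^sub>R b \<in> V}" using assms by auto
  then have "pderivs (A \<times> V) (map (\<lambda>b. (0, b)) (b # \<alpha>)) G (e, x)
      = vector_derivative (\<lambda>t. pderivs (A \<times> V) (map (\<lambda>b. (0, b)) \<alpha>) G (e, x + t *\<^sub>R b)) (at 0 within {t. x + t *\<^sub>R b \<in> V})"
    by (simp add: dderiv_def)
  also have "\<dots> = vector_derivative (\<lambda>t. pderivs V \<alpha> (\<lambda>y. G (e, y)) (x + t *\<^sub>R b)) (at 0 within {t. x + t *\<^sub>R b \<in> V})"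
    by (rule vector_derivative_cong_near_0[OF _ zero_less_one]) (use Cons in auto)
  finally show ?case by (simp add: dderiv_def)
qed simp

section \<open>Derivatives of functions of the form a(\<epsilon>) w(x)\<close>

definition time_order :: "(real \<times> 'a::zero) list \<Rightarrow> nat" where
  "time_order \<alpha> = length (filter (\<lambda>d. fst d \<noteq> 0) \<alpha>)"

definition space_dirs :: "(real \<times> 'a) list \<Rightarrow> 'a list" where
  "space_dirs \<alpha> = map snd (filter (\<lambda>d. fst d = 0) \<alpha>)"

text \<open>Closed form of the derivatives of \<open>(\<epsilon>, x) \<mapsto> a \<epsilon> *\<^sub>R w x\<close> along a basis list \<open>\<alpha>\<close> of
  \<open>\<real> \<times> 'a\<close>: the directions \<open>(1, 0)\<close> fall on \<open>a\<close> and the directions \<open>(0, b)\<close> on \<open>w\<close>.\<close>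

definition separated_pderivs ::
    "'a::euclidean_space set \<Rightarrow> (real \<Rightarrow> real) \<Rightarrow> ('a \<Rightarrow> 'k::real_normed_vector) \<Rightarrow> (real \<times> 'a) list \<Rightarrow> real \<times> 'a \<Rightarrow> 'k" where
  "separated_pderivs V a w \<alpha> q = (deriv ^^ time_order \<alpha>) a (fst q) *\<^sub>R pderivs V (space_dirs \<alpha>) w (snd q)"

lemma Basis_prod_cases:
  fixes d :: "real \<times> 'a::euclidean_space"
  assumes "d \<in> Basis"
  obtains "d = (1, 0)" | b where "b \<in> Basis" "d = (0, b)"
  using assms by (auto simp: Basis_prod_def)

lemma space_dirs_Basis: "set \<alpha> \<subseteq> Basis \<Longrightarrow> set (space_dirs \<alpha>) \<subseteq> Basis"
  by (auto simp: space_dirs_def Basis_prod_def)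

lemma at_within_Ipar_Times_line_neq_bot:
  fixes V :: "'a::euclidean_space set"
  assumes "open V" "q \<in> Ipar \<times> V" "d \<in> Basis"
  shows "at 0 within {t. q + t *\<^sub>R d \<in> Ipar \<times> V} \<noteq> bot"
proof -
  obtain e x where q: "q = (e, x)" "0 < e" "e \<le> 1" "x \<in> V" using assms(2) by (auto simp: Ipar_def)
  from assms(3) show ?thesis
  proof (cases rule: Basis_prod_cases)
    case 1
    have "{-e<..<0} \<subseteq> {t. q + t *\<^sub>R d \<in> Ipar \<times> V}"
      using q by (auto simp: 1 Ipar_def)
    moreover have "(0::real) islimpt {-e<..<0}" using q by (intro islimpt_greaterThanLessThan2) auto
    ultimately have "0 islimpt {t. q + t *\<^sub>R d \<in> Ipar \<times> V}" by (rule islimpt_subset[rotated])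
    then show ?thesis by (simp add: trivial_limit_within)
  next
    case (2 b)
    have "{t. q + t *\<^sub>R d \<in> Ipar \<times> V} = {t. x + t *\<^sub>R b \<in> V}"
      using q by (auto simp: 2 Ipar_def)
    then show ?thesis using at_within_line_open[OF assms(1) q(4)] by simp
  qed
qed

lemma DERIV_deriv_iter_shift:
  assumes "smooth_real f"
  shows "((\<lambda>t. (deriv ^^ j) f (e + t)) has_field_derivative (deriv ^^ Suc j) f e) (at 0)"
proof -
  have "DERIV ((deriv ^^ j) f) (e + 0) :> (deriv ^^ Suc j) f (e + 0)" by (rule DERIV_deriv_iter[OF assms])
  moreover have "((\<lambda>t. e + t) has_field_derivative 1) (at (0::real))" by (auto intro!: derivative_eq_intros)
  ultimately show ?thesis using DERIV_chain2 by fastforce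
qed

lemma has_vector_derivative_separated_pderivs:
  fixes V :: "'a::euclidean_space set" and w :: "'a \<Rightarrow> 'k::real_normed_vector"
  assumes "open V" "smooth_real a" "smooth_on_dom V w" "set \<alpha> \<subseteq> Basis" "x \<in> V" "d \<in> Basis"
  shows "((\<lambda>t. separated_pderivs V a w \<alpha> ((e, x) + t *\<^sub>R d)) has_vector_derivative
            separated_pderivs V a w (d # \<alpha>) (e, x)) (at 0)"
  using assms(6)
proof (cases rule: Basis_prod_cases)
  case 1
  then have "time_order (d # \<alpha>) = Suc (time_order \<alpha>)" "space_dirs (d # \<alpha>) = space_dirs \<alpha>"
    by (simp_all add: time_order_def space_dirs_def)
  with DERIV_deriv_iter_shift[OF assms(2), of "time_order \<alpha>" e] show ?thesis
    by (auto simp: separated_pderivs_def 1 intro!: derivative_eq_intros)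
next
  case (2 b)
  then have "time_order (d # \<alpha>) = time_order \<alpha>" "space_dirs (d # \<alpha>) = b # space_dirs \<alpha>"
    by (simp_all add: time_order_def space_dirs_def)
  moreover have "((\<lambda>t. pderivs V (space_dirs \<alpha>) w (x + t *\<^sub>R b)) has_vector_derivative
      dderiv V b (pderivs V (space_dirs \<alpha>) w) x) (at 0)"
    using smooth_on_dom_differentiable_at[OF assms(1,3) space_dirs_Basis[OF assms(4)] 2(1) assms(5)]
    by (simp add: dderiv_open[OF assms(1,5)] vector_derivative_works)
  ultimately show ?thesis
    by (auto simp: separated_pderivs_def 2 intro: has_vector_derivative_scaleR_const)
qed

lemma pderivs_separated:
  fixes V :: "'a::euclidean_space set" and w1 w2 :: "'a \<Rightarrow> 'k::real_normed_vector"
  assumes "open V" "smooth_real a" "smooth_real b" "smooth_on_dom V w1" "smooth_on_dom V w2"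
  shows "set \<alpha> \<subseteq> Basis \<Longrightarrow> q \<in> Ipar \<times> V \<Longrightarrow>
    pderivs (Ipar \<times> V) \<alpha> (\<lambda>q. a (fst q) *\<^sub>R w1 (snd q) + b (fst q) *\<^sub>R w2 (snd q)) q
      = separated_pderivs V a w1 \<alpha> q + separated_pderivs V b w2 \<alpha> q"
proof (induction \<alpha> arbitrary: q)
  case Nil
  then show ?case by (simp add: separated_pderivs_def time_order_def space_dirs_def)
next
  case (Cons d \<alpha>)
  obtain e x where q: "q = (e, x)" "x \<in> V" using Cons.prems(2) by auto
  have d: "d \<in> Basis" and \<alpha>: "set \<alpha> \<subseteq> Basis" using Cons.prems by auto
  let ?F = "\<lambda>\<alpha> q. separated_pderivs V a w1 \<alpha> q + separated_pderivs V b w2 \<alpha> q"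
  have "((\<lambda>t. ?F \<alpha> (q + t *\<^sub>R d)) has_vector_derivative ?F (d # \<alpha>) q) (at 0)"
    unfolding q using assms \<alpha> d q(2)
    by (intro has_vector_derivative_add has_vector_derivative_separated_pderivs)
  then have "vector_derivative (\<lambda>t. ?F \<alpha> (q + t *\<^sub>R d)) (at 0 within {t. q + t *\<^sub>R d \<in> Ipar \<times> V}) = ?F (d # \<alpha>) q"
    by (rule vector_derivative_within[OF at_within_Ipar_Times_line_neq_bot[OF assms(1) Cons.prems(2) d]
        has_vector_derivative_at_within])
  moreover have "pderivs (Ipar \<times> V) (d # \<alpha>) (\<lambda>q. a (fst q) *\<^sub>R w1 (snd q) + b (fst q) *\<^sub>R w2 (snd q)) q
      = vector_derivative (\<lambda>t. ?F \<alpha> (q + t *\<^sub>R d)) (at 0 within {t. q + t *\<^sub>R d \<in> Ipar \<times> V})"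
    unfolding pderivs.simps dderiv_def
    by (rule vector_derivative_cong_near_0[OF _ zero_less_one]) (use Cons \<alpha> in auto)
  ultimately show ?case by simp
qed

lemma continuous_on_separated_pderivs:
  fixes V :: "'a::euclidean_space set" and w :: "'a \<Rightarrow> 'k::real_normed_vector"
  assumes "smooth_real a" "smooth_on_dom V w" "set \<alpha> \<subseteq> Basis"
  shows "continuous_on (T \<times> V) (separated_pderivs V a w \<alpha>)"
proof -
  have "continuous_on V (pderivs V (space_dirs \<alpha>) w)"
    using assms(2) space_dirs_Basis[OF assms(3)] unfolding smooth_on_dom_def by blast
  then have "continuous_on (T \<times> V) (\<lambda>q. pderivs V (space_dirs \<alpha>) w (snd q))"
    by (rule continuous_on_compose2) (auto intro: continuous_intros)
  moreover have "continuous_on UNIV ((deriv ^^ time_order \<alpha>) a)"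
    using DERIV_deriv_iter[OF assms(1)] by (meson DERIV_isCont continuous_at_imp_continuous_on)
  then have "continuous_on (T \<times> V) (\<lambda>q. (deriv ^^ time_order \<alpha>) a (fst q))"
    by (rule continuous_on_compose2) (auto intro: continuous_intros)
  ultimately show ?thesis
    unfolding separated_pderivs_def[abs_def] by (intro continuous_intros)
qed

lemma smooth_on_dom_separated:
  fixes V :: "'a::euclidean_space set" and w1 w2 :: "'a \<Rightarrow> 'k::real_normed_vector"
  assumes "open V" "smooth_real a" "smooth_real b" "smooth_on_dom V w1" "smooth_on_dom V w2"
  shows "smooth_on_dom (Ipar \<times> V) (\<lambda>q. a (fst q) *\<^sub>R w1 (snd q) + b (fst q) *\<^sub>R w2 (snd q))"
  unfolding smooth_on_dom_def
proof (intro allI impI conjI ballI)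
  fix \<alpha> :: "(real \<times> 'a) list" assume \<alpha>: "set \<alpha> \<subseteq> Basis"
  let ?F = "\<lambda>\<alpha> q. separated_pderivs V a w1 \<alpha> q + separated_pderivs V b w2 \<alpha> q"
  have "continuous_on (Ipar \<times> V) (?F \<alpha>)"
    by (rule continuous_on_add[OF continuous_on_separated_pderivs[OF assms(2,4) \<alpha>]
        continuous_on_separated_pderivs[OF assms(3,5) \<alpha>]])
  then show "continuous_on (Ipar \<times> V) (pderivs (Ipar \<times> V) \<alpha> (\<lambda>q. a (fst q) *\<^sub>R w1 (snd q) + b (fst q) *\<^sub>R w2 (snd q)))"
    by (rule continuous_on_eq) (use pderivs_separated[OF assms \<alpha>] in auto)
  fix d q :: "real \<times> 'a" assume d: "d \<in> Basis" and q: "q \<in> Ipar \<times> V"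
  obtain e x where ex: "q = (e, x)" "x \<in> V" using q by auto
  have "((\<lambda>t. ?F \<alpha> (q + t *\<^sub>R d)) has_vector_derivative ?F (d # \<alpha>) q) (at 0)"
    unfolding ex(1) using assms \<alpha> d ex(2)
    by (intro has_vector_derivative_add has_vector_derivative_separated_pderivs)
  then have "(\<lambda>t. ?F \<alpha> (q + t *\<^sub>R d)) differentiable (at 0 within {t. q + t *\<^sub>R d \<in> Ipar \<times> V})"
    by (rule differentiableI_vector[OF has_vector_derivative_at_within])
  then show "(\<lambda>t. pderivs (Ipar \<times> V) \<alpha> (\<lambda>q. a (fst q) *\<^sub>R w1 (snd q) + b (fst q) *\<^sub>R w2 (snd q)) (q + t *\<^sub>R d))
          differentiable (at 0 within {t. q + t *\<^sub>R d \<in> Ipar \<times> V})"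
    by (subst differentiable_cong_near_0[OF _ zero_less_one]) (use pderivs_separated[OF assms \<alpha>] q in auto)
qed

section \<open>A grid in (0,1] refined near 0\<close>

definition dyadic_level :: "real \<Rightarrow> nat" where
  "dyadic_level a = (LEAST k. (1/2::real) ^ Suc k < a)"

lemma ex_half_power_less: "0 < (a::real) \<Longrightarrow> \<exists>k. (1/2::real) ^ Suc k < a"
proof -
  assume "0 < a"
  then obtain n where "(1/2::real) ^ n < a" using real_arch_pow_inv[of a "1/2"] by auto
  moreover have "(1/2::real) ^ Suc n \<le> (1/2) ^ n" by (simp add: power_decreasing)
  ultimately show ?thesis by (meson le_less_trans)
qed

lemma half_power_dyadic_level_less: "0 < a \<Longrightarrow> (1/2::real) ^ Suc (dyadic_level a) < a"
  unfolding dyadic_level_def by (rule LeastI_ex[OF ex_half_power_less])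

lemma dyadic_level_le: "(1/2::real) ^ Suc k < a \<Longrightarrow> dyadic_level a \<le> k"
  unfolding dyadic_level_def by (rule Least_le)

fun grid :: "(nat \<Rightarrow> real) \<Rightarrow> nat \<Rightarrow> real" where
  "grid D 0 = 1"
| "grid D (Suc n) = grid D n - D (dyadic_level (grid D n))"

definition admissible_steps :: "(nat \<Rightarrow> real) \<Rightarrow> bool" where
  "admissible_steps D \<longleftrightarrow> (\<forall>k. 0 < D k \<and> D k \<le> (1/2) ^ (k + 2))"

lemma grid_Suc_less: "admissible_steps D \<Longrightarrow> grid D (Suc n) < grid D n"
  by (simp add: admissible_steps_def)

lemma grid_Suc_gt:
  assumes "admissible_steps D" "0 < grid D n"
  shows "(1/2) ^ (dyadic_level (grid D n) + 2) < grid D (Suc n)"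
proof -
  define k where "k = dyadic_level (grid D n)"
  have "(1/2::real) ^ Suc k < grid D n" using half_power_dyadic_level_less[OF assms(2)] by (simp add: k_def)
  moreover have "D k \<le> (1/2) ^ (k + 2)" using assms(1) by (simp add: admissible_steps_def)
  ultimately show ?thesis by (simp add: k_def[symmetric])
qed

lemma grid_pos: "admissible_steps D \<Longrightarrow> 0 < grid D n"
proof (induction n)
  case (Suc n)
  have "(0::real) < (1/2) ^ (dyadic_level (grid D n) + 2)" by simp
  then show ?case using grid_Suc_gt[OF Suc.prems Suc.IH[OF Suc.prems]] by linarith
qed simp

lemma grid_antimono:
  assumes "admissible_steps D" "n \<le> m" shows "grid D m \<le> grid D n"
  using assms(2)
proof (induction m rule: dec_induct)
  case (step m)
  then show ?case using grid_Suc_less[OF assms(1), of m] by linarith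
qed simp

lemma grid_in_Ipar: "admissible_steps D \<Longrightarrow> grid D n \<in> Ipar"
  using grid_pos grid_antimono[of D 0 n] by (auto simp: Ipar_def)

text \<open>On each dyadic band the steps are bounded below, so the grid leaves every band after
  finitely many steps.\<close>

lemma ex_grid_less:
  assumes "admissible_steps D" "c > 0"
  shows "\<exists>n. grid D n < c"
proof (rule ccontr)
  assume "\<not> (\<exists>n. grid D n < c)"
  then have ge: "c \<le> grid D n" for n by (simp add: not_less)
  obtain k0 where k0: "(1/2::real) ^ Suc k0 < c" using ex_half_power_less[OF assms(2)] by blast
  define \<mu> where "\<mu> = Min (D ` {..k0})"
  have \<mu>: "\<mu> > 0" unfolding \<mu>_def using assms(1) by (subst Min_gr_iff) (auto simp: admissible_steps_def)
  have \<mu>_le: "\<mu> \<le> D (dyadic_level (grid D n))" for n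
    unfolding \<mu>_def using dyadic_level_le[of k0 "grid D n"] ge[of n] k0 by (intro Min_le) auto
  have "grid D n \<le> 1 - real n * \<mu>" for n
  proof (induction n)
    case (Suc n)
    then show ?case using \<mu>_le[of n] by (simp add: algebra_simps)
  qed simp
  moreover obtain n where "real n * \<mu> > 1"
    using \<mu> by (metis ex_less_of_nat_mult mult.commute)
  ultimately show False using grid_pos[OF assms(1), of n] by (smt (verit))
qed

lemma ex1_grid_interval:
  assumes "admissible_steps D" "0 < e" "e \<le> 1"
  shows "\<exists>!n. grid D (Suc n) < e \<and> e \<le> grid D n"
proof -
  define m where "m = (LEAST m. grid D m < e)"
  have m: "grid D m < e" unfolding m_def by (rule LeastI_ex[OF ex_grid_less[OF assms(1,2)]])
  then obtain n where n: "m = Suc n" using assms(3) by (cases m) auto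
  have "\<not> grid D n < e" using not_less_Least[of n "\<lambda>m. grid D m < e"] n by (simp add: m_def)
  then have n_interval: "grid D (Suc n) < e \<and> e \<le> grid D n" using m n by simp
  show ?thesis
  proof (rule ex1I[of _ n])
    fix n' assume n': "grid D (Suc n') < e \<and> e \<le> grid D n'"
    show "n' = n"
    proof (rule ccontr)
      assume "n' \<noteq> n"
      then have "Suc n' \<le> n \<or> Suc n \<le> n'" by linarith
      then show False
        using n' n_interval grid_antimono[OF assms(1), of "Suc n'" n] grid_antimono[OF assms(1), of "Suc n" n']
        by linarith
    qed
  qed (rule n_interval)
qed

definition grid_index :: "(nat \<Rightarrow> real) \<Rightarrow> real \<Rightarrow> nat" where
  "grid_index D e = (THE n. grid D (Suc n) < e \<and> e \<le> grid D n)"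

lemma grid_index:
  assumes "admissible_steps D" "e \<in> Ipar"
  shows "grid D (Suc (grid_index D e)) < e" "e \<le> grid D (grid_index D e)"
  using theI'[OF ex1_grid_interval[OF assms(1)]] assms(2) unfolding grid_index_def Ipar_def by auto

lemma grid_index_eqI:
  assumes "admissible_steps D" "grid D (Suc n) < e" "e \<le> grid D n"
  shows "grid_index D e = n"
proof -
  have "0 < e" "e \<le> 1"
    using assms grid_pos[OF assms(1), of "Suc n"] grid_antimono[OF assms(1), of 0 n] by auto
  then show ?thesis
    unfolding grid_index_def using ex1_grid_interval[OF assms(1)] assms(2,3) by (intro the1_equality) auto
qed

lemma le_dyadic_level_grid_index:
  assumes "admissible_steps D" "0 < e" "e \<le> (1/2) ^ Suc M"
  shows "M \<le> dyadic_level (grid D (grid_index D e))"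
proof -
  have "e \<in> Ipar" using assms(2,3) power_le_one[of "1/2::real" "Suc M"] by (auto simp: Ipar_def)
  define k where "k = dyadic_level (grid D (grid_index D e))"
  have "(1/2::real) ^ (k + 2) < e"
    using grid_Suc_gt[OF assms(1) grid_pos[OF assms(1)]] grid_index(1)[OF assms(1) \<open>e \<in> Ipar\<close>]
    unfolding k_def by (meson order.strict_trans)
  then have "(1/2::real) ^ (k + 2) < (1/2) ^ Suc M" using assms(3) by linarith
  moreover have "((1/2::real) ^ (k + 2) < (1/2) ^ Suc M) = (Suc M < k + 2)"
    by (rule power_strict_decreasing_iff) auto
  ultimately have "Suc M < k + 2" by blast
  then show ?thesis by (simp add: k_def)
qed

section \<open>Smoothing a net along the grid\<close>

definition blend :: "(nat \<Rightarrow> real) \<Rightarrow> nat \<Rightarrow> real \<Rightarrow> real" where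
  "blend D n e = smooth_step ((e - grid D (Suc n)) / (grid D n - grid D (Suc n)))"

definition smoothed_net :: "(nat \<Rightarrow> real) \<Rightarrow> (real \<Rightarrow> 'a \<Rightarrow> 'k::real_normed_vector) \<Rightarrow> real \<Rightarrow> 'a \<Rightarrow> 'k" where
  "smoothed_net D u e x =
     blend D (grid_index D e) e *\<^sub>R u (grid D (grid_index D e)) x
     + (1 - blend D (grid_index D e) e) *\<^sub>R u (grid D (Suc (grid_index D e))) x"

lemma smooth_real_blend:
  assumes "admissible_steps D" shows "smooth_real (blend D n)"
proof -
  define L where "L = grid D n - grid D (Suc n)"
  have "L > 0" using grid_Suc_less[OF assms, of n] by (simp add: L_def)
  then have "blend D n = (\<lambda>t. smooth_step ((1 / L) * t + (- grid D (Suc n) / L)))"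
    by (auto simp: fun_eq_iff blend_def L_def diff_divide_distrib simp del: grid.simps)
  then show ?thesis using smooth_real_affine[OF smooth_real_smooth_step] by metis
qed

lemma blend_bounds: "0 \<le> blend D n e" "blend D n e \<le> 1"
  unfolding blend_def by (rule smooth_step_bounds)+

lemma smoothed_net_on_grid_interval:
  assumes "admissible_steps D" "grid D (Suc n) < e" "e \<le> grid D n"
  shows "smoothed_net D u e = (\<lambda>x. blend D n e *\<^sub>R u (grid D n) x + (1 - blend D n e) *\<^sub>R u (grid D (Suc n)) x)"
  using grid_index_eqI[OF assms] by (simp add: fun_eq_iff smoothed_net_def)

text \<open>Just below a grid point \<open>g\<close> the blend is 1, just above it the blend of the next interval is 0,
  so the smoothed net is constant in \<open>\<epsilon>\<close> near \<open>g\<close>.\<close>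

lemma smoothed_net_near_grid:
  assumes "admissible_steps D"
  obtains r where "r > 0" "\<And>e. \<bar>e - grid D (Suc m)\<bar> < r \<Longrightarrow> smoothed_net D u e = u (grid D (Suc m))"
proof -
  define g where "g = grid D (Suc m)"
  define L where "L = g - grid D (Suc (Suc m))"
  define L' where "L' = grid D m - g"
  define r where "r = min L L' / 3"
  have L: "L > 0" "L' > 0"
    using grid_Suc_less[OF assms, of m] grid_Suc_less[OF assms, of "Suc m"]
    by (simp_all add: L_def L'_def g_def del: grid.simps)
  have r: "0 < r" "r \<le> L / 3" "r \<le> L' / 3" using L by (auto simp: r_def)
  have "smoothed_net D u e = u g" if e: "g - r < e" "e < g + r" for e
  proof (cases "e \<le> g")
    case True
    have "2/3 \<le> (e - grid D (Suc (Suc m))) / L"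
      using e r L by (simp add: pos_le_divide_eq L_def del: grid.simps)
    then have "blend D (Suc m) e = 1" unfolding blend_def L_def g_def by (rule smooth_step_eq_1)
    moreover have "grid D (Suc (Suc m)) < e" using e r L by (simp add: L_def del: grid.simps)
    ultimately show ?thesis using smoothed_net_on_grid_interval[OF assms _ True[unfolded g_def]]
      by (simp add: g_def fun_eq_iff del: grid.simps)
  next
    case False
    have "(e - g) / L' \<le> 1/3" using e r L by (simp add: pos_divide_le_eq L'_def del: grid.simps)
    then have "blend D m e = 0" unfolding blend_def L'_def g_def by (rule smooth_step_eq_0)
    moreover have "e \<le> grid D m" using e r L by (simp add: L'_def del: grid.simps)
    ultimately show ?thesis using smoothed_net_on_grid_interval[OF assms _, of m e] False
      by (simp add: g_def fun_eq_iff del: grid.simps)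
  qed
  with r(1) that show ?thesis by (simp add: g_def abs_less_iff)
qed

lemma co_net_smooth_on_dom:
  "co_net V u \<Longrightarrow> e \<in> Ipar \<Longrightarrow> smooth_on_dom V (u e)"
  unfolding co_net_def by blast

lemma smoothed_net_locally_separated:
  assumes "admissible_steps D" "e \<in> Ipar"
  obtains W a b i j where "open W" "e \<in> W" "smooth_real a" "smooth_real b"
    "\<And>e'. e' \<in> W \<Longrightarrow> e' \<in> Ipar \<Longrightarrow>
       smoothed_net D u e' = (\<lambda>x. a e' *\<^sub>R u (grid D i) x + b e' *\<^sub>R u (grid D j) x)"
proof -
  define n where "n = grid_index D e"
  have n: "grid D (Suc n) < e" "e \<le> grid D n" using grid_index[OF assms] by (auto simp: n_def)
  show ?thesis
  proof (cases "e < grid D n \<or> n = 0")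
    case True
    define W where "W = {grid D (Suc n)<..<(if n = 0 then 2 else grid D n)}"
    have "smoothed_net D u e' = (\<lambda>x. blend D n e' *\<^sub>R u (grid D n) x + (1 - blend D n e') *\<^sub>R u (grid D (Suc n)) x)"
      if "e' \<in> W" "e' \<in> Ipar" for e'
      using that by (intro smoothed_net_on_grid_interval[OF assms(1)])
        (auto simp: W_def Ipar_def split: if_splits simp del: grid.simps(2))
    moreover have "open W" "e \<in> W" using True n by (auto simp: W_def)
    ultimately show ?thesis
      using that smooth_real_blend[OF assms(1)] smooth_real_one_minus[OF smooth_real_blend[OF assms(1)]]
      by blast
  next
    case False
    then obtain m where m: "e = grid D (Suc m)" using n by (cases n) auto
    obtain r where r: "r > 0" "\<And>e'. \<bar>e' - grid D (Suc m)\<bar> < r \<Longrightarrow> smoothed_net D u e' = u (grid D (Suc m))"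
      using smoothed_net_near_grid[OF assms(1)] by blast
    have "smoothed_net D u e' = (\<lambda>x. (\<lambda>_. 1) e' *\<^sub>R u (grid D (Suc m)) x + (\<lambda>_. 0) e' *\<^sub>R u (grid D (Suc m)) x)"
      if "e' \<in> {e - r<..<e + r}" for e'
      using r(2)[of e'] that m by (simp add: abs_less_iff del: grid.simps)
    then show ?thesis
      by (intro that[of "{e - r<..<e + r}" "\<lambda>_. 1" "\<lambda>_. 0" "Suc m" "Suc m"] smooth_real_const)
        (use r(1) in auto)
  qed
qed

lemma smooth_on_dom_smoothed_net_Times:
  fixes u :: "real \<Rightarrow> 'a::euclidean_space \<Rightarrow> 'k::real_normed_vector"
  assumes "open V" "co_net V u" "admissible_steps D"
  shows "smooth_on_dom (Ipar \<times> V) (\<lambda>p. smoothed_net D u (fst p) (snd p))"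
proof (rule smooth_on_dom_localI)
  fix q assume "q \<in> Ipar \<times> V"
  then obtain e x where q: "q = (e, x)" "e \<in> Ipar" by auto
  obtain W a b i j where W: "open W" "e \<in> W" "smooth_real a" "smooth_real b" and
    eq: "\<And>e'. e' \<in> W \<Longrightarrow> e' \<in> Ipar \<Longrightarrow>
      smoothed_net D u e' = (\<lambda>x. a e' *\<^sub>R u (grid D i) x + b e' *\<^sub>R u (grid D j) x)"
    using smoothed_net_locally_separated[OF assms(3) q(2)] by blast
  have "smooth_on_dom (Ipar \<times> V) (\<lambda>p. a (fst p) *\<^sub>R u (grid D i) (snd p) + b (fst p) *\<^sub>R u (grid D j) (snd p))"
    using W(3,4) co_net_smooth_on_dom[OF assms(2) grid_in_Ipar[OF assms(3)]]
    by (intro smooth_on_dom_separated assms(1))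
  moreover have "open (W \<times> UNIV)" "q \<in> W \<times> UNIV" using W q by (auto simp: open_Times)
  ultimately show "\<exists>W G. open W \<and> q \<in> W \<and> smooth_on_dom (Ipar \<times> V) G \<and>
          (\<forall>p\<in>Ipar \<times> V. p \<in> W \<longrightarrow> smoothed_net D u (fst p) (snd p) = G p)"
    using eq by fastforce
qed

lemma smooth_on_dom_smoothed_net:
  fixes u :: "real \<Rightarrow> 'a::euclidean_space \<Rightarrow> 'k::real_normed_vector"
  assumes "open V" "co_net V u" "admissible_steps D"
  shows "smooth_on_dom V (smoothed_net D u e)"
  unfolding smoothed_net_def[abs_def]
  by (intro smooth_on_dom_lincomb assms(1) co_net_smooth_on_dom[OF assms(2) grid_in_Ipar[OF assms(3)]])

lemma co_net_smoothed_net: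
  fixes u :: "real \<Rightarrow> 'a::euclidean_space \<Rightarrow> 'k::real_normed_vector"
  assumes "open V" "co_net V u" "admissible_steps D"
  shows "co_net V (smoothed_net D u)"
  unfolding co_net_def
proof (intro conjI allI impI ballI smooth_on_dom_smoothed_net[OF assms])
  fix \<alpha> :: "'a list" assume \<alpha>: "set \<alpha> \<subseteq> Basis"
  have "set (map (\<lambda>b. (0::real, b)) \<alpha>) \<subseteq> Basis" using \<alpha> by (auto simp: Basis_prod_def)
  then have "continuous_on (Ipar \<times> V)
      (pderivs (Ipar \<times> V) (map (\<lambda>b. (0::real, b)) \<alpha>) (\<lambda>p. smoothed_net D u (fst p) (snd p)))"
    using smooth_on_dom_smoothed_net_Times[OF assms] unfolding smooth_on_dom_def by blast
  then show "continuous_on (Ipar \<times> V) (\<lambda>p. pderivs V \<alpha> (smoothed_net D u (fst p)) (snd p))"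
    by (rule continuous_on_eq) (auto simp: pderivs_Times_snd)
qed

section \<open>Estimates for the smoothing error\<close>

lemma pderivs_diff:
  fixes f g :: "'a::euclidean_space \<Rightarrow> 'b::real_normed_vector"
  assumes "open V" "smooth_on_dom V f" "smooth_on_dom V g" "set \<alpha> \<subseteq> Basis" "x \<in> V"
  shows "pderivs V \<alpha> (\<lambda>x. f x - g x) x = pderivs V \<alpha> f x - pderivs V \<alpha> g x"
  using pderivs_lincomb[OF assms(1-4,5), of 1 "-1"] by simp

lemma co_net_diff:
  fixes u v :: "real \<Rightarrow> 'a::euclidean_space \<Rightarrow> 'k::real_normed_vector"
  assumes "open V" "co_net V u" "co_net V v"
  shows "co_net V (\<lambda>e x. u e x - v e x)"
  unfolding co_net_def
proof (intro conjI allI impI ballI)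
  fix e assume e: "e \<in> Ipar"
  show "smooth_on_dom V (\<lambda>x. u e x - v e x)"
    using smooth_on_dom_lincomb[OF assms(1) co_net_smooth_on_dom[OF assms(2) e]
        co_net_smooth_on_dom[OF assms(3) e], of 1 "-1"] by simp
next
  fix \<alpha> :: "'a list" assume \<alpha>: "set \<alpha> \<subseteq> Basis"
  have "continuous_on (Ipar \<times> V) (\<lambda>p. pderivs V \<alpha> (u (fst p)) (snd p) - pderivs V \<alpha> (v (fst p)) (snd p))"
    using assms(2,3) \<alpha> unfolding co_net_def by (intro continuous_on_diff) auto
  then show "continuous_on (Ipar \<times> V) (\<lambda>p. pderivs V \<alpha> (\<lambda>x. u (fst p) x - v (fst p) x) (snd p))"
    by (rule continuous_on_eq)
       (auto simp: pderivs_diff[OF assms(1) co_net_smooth_on_dom[OF assms(2)] co_net_smooth_on_dom[OF assms(3)] \<alpha>])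
qed

lemma norm_diff_convex_comb_le:
  fixes p p1 p2 :: "'a::real_normed_vector"
  assumes "0 \<le> c" "c \<le> 1" "norm (p - p1) \<le> B" "norm (p - p2) \<le> B"
  shows "norm (p - (c *\<^sub>R p1 + (1 - c) *\<^sub>R p2)) \<le> B"
proof -
  have "p - (c *\<^sub>R p1 + (1 - c) *\<^sub>R p2) = c *\<^sub>R (p - p1) + (1 - c) *\<^sub>R (p - p2)"
    by (simp add: algebra_simps)
  then have "norm (p - (c *\<^sub>R p1 + (1 - c) *\<^sub>R p2)) \<le> c * norm (p - p1) + (1 - c) * norm (p - p2)"
    using assms(1,2) by (metis abs_of_nonneg diff_ge_0_iff_ge norm_scaleR norm_triangle_ineq)
  also have "\<dots> \<le> c * B + (1 - c) * B"
    using assms by (intro add_mono mult_left_mono) auto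
  finally show ?thesis by (simp add: algebra_simps)
qed

text \<open>Grid intervals starting at a point of dyadic level \<open>k\<close> have length \<open>D k\<close> and lie in
  \<open>[(1/2)^(k+2), 1]\<close>, so this bounds the variation of the derivatives of order at most \<open>k\<close> of \<open>u\<close>
  across such an interval.\<close>

definition controls_oscillation :: "'a::euclidean_space set \<Rightarrow> (real \<Rightarrow> 'a \<Rightarrow> 'k::real_normed_vector) \<Rightarrow> (nat \<Rightarrow> real) \<Rightarrow> bool" where
  "controls_oscillation V u D \<longleftrightarrow>
     (\<forall>k \<alpha> e e' x. set \<alpha> \<subseteq> Basis \<and> length \<alpha> \<le> k \<and> e \<in> {(1/2)^(k+2)..1} \<and> e' \<in> {(1/2)^(k+2)..1} \<and>
        \<bar>e - e'\<bar> \<le> D k \<and> x \<in> V \<longrightarrow>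
        norm (pderivs V \<alpha> (u e) x - pderivs V \<alpha> (u e') x) \<le> ((1/2)^(k+2)) ^ k)"

lemma smoothing_error_bound:
  fixes u :: "real \<Rightarrow> 'a::euclidean_space \<Rightarrow> 'k::real_normed_vector"
  assumes "open V" "co_net V u" "admissible_steps D" "controls_oscillation V u D"
    and "e \<in> Ipar" "x \<in> V" "set \<alpha> \<subseteq> Basis" "length \<alpha> \<le> dyadic_level (grid D (grid_index D e))"
  shows "norm (pderivs V \<alpha> (\<lambda>x. u e x - smoothed_net D u e x) x) \<le> e ^ dyadic_level (grid D (grid_index D e))"
proof -
  define n where "n = grid_index D e"
  define k where "k = dyadic_level (grid D n)"
  define c where "c = blend D n e"
  have n: "grid D (Suc n) < e" "e \<le> grid D n" using grid_index[OF assms(3,5)] by (auto simp: n_def)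
  have floor: "(1/2) ^ (k + 2) < grid D (Suc n)" using grid_Suc_gt[OF assms(3) grid_pos[OF assms(3)]] by (simp add: k_def)
  have step: "grid D n - grid D (Suc n) = D k" by (simp add: k_def)
  have in_band: "grid D (Suc n) \<in> {(1/2)^(k+2)..1}" "grid D n \<in> {(1/2)^(k+2)..1}" "e \<in> {(1/2)^(k+2)..1}"
    using floor n grid_in_Ipar[OF assms(3), of n] assms(5) by (auto simp: Ipar_def)
  have sm: "smooth_on_dom V (u e)" "smooth_on_dom V (u (grid D m))" for m
    using co_net_smooth_on_dom[OF assms(2)] assms(5) grid_in_Ipar[OF assms(3)] by auto
  have "pderivs V \<alpha> (\<lambda>x. u e x - smoothed_net D u e x) x
      = pderivs V \<alpha> (u e) x - (c *\<^sub>R pderivs V \<alpha> (u (grid D n)) x + (1 - c) *\<^sub>R pderivs V \<alpha> (u (grid D (Suc n))) x)"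
  proof -
    have "smoothed_net D u e = (\<lambda>x. c *\<^sub>R u (grid D n) x + (1 - c) *\<^sub>R u (grid D (Suc n)) x)"
      by (simp add: fun_eq_iff smoothed_net_def c_def n_def del: grid.simps)
    then have "pderivs V \<alpha> (smoothed_net D u e) x
        = c *\<^sub>R pderivs V \<alpha> (u (grid D n)) x + (1 - c) *\<^sub>R pderivs V \<alpha> (u (grid D (Suc n))) x"
      using pderivs_lincomb[OF assms(1) sm(2) sm(2) assms(7,6)] by (simp only:)
    then show ?thesis
      using pderivs_diff[OF assms(1) sm(1) smooth_on_dom_smoothed_net[OF assms(1-3)] assms(7,6)] by simp
  qed
  also have "norm \<dots> \<le> ((1/2)^(k+2)) ^ k"
    using assms(4,7,8) assms(6) in_band n step blend_bounds[of D n e]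
    unfolding controls_oscillation_def c_def k_def n_def
    by (intro norm_diff_convex_comb_le) (auto simp del: grid.simps)
  also have "\<dots> \<le> e ^ k" using floor n by (intro power_mono) auto
  finally show ?thesis by (simp add: k_def n_def)
qed

lemma negligible_net_smoothing_error:
  fixes u :: "real \<Rightarrow> 'a::euclidean_space \<Rightarrow> 'k::real_normed_vector"
  assumes "open V" "co_net V u" "admissible_steps D" "controls_oscillation V u D"
  shows "negligible_net V (\<lambda>e x. u e x - smoothed_net D u e x)"
  unfolding negligible_net_def
proof (intro allI impI)
  fix K :: "'a set" and \<alpha> :: "'a list" and m :: nat
  assume K: "compact K \<and> K \<subseteq> V \<and> set \<alpha> \<subseteq> Basis"
  define M where "M = max m (length \<alpha>)"
  have "(1/2::real) ^ Suc M \<le> 1" by (rule power_le_one) auto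
  moreover have "norm (pderivs V \<alpha> (\<lambda>x. u e x - smoothed_net D u e x) x) \<le> 1 * e ^ m"
    if e: "e \<in> {0<..(1/2) ^ Suc M}" and x: "x \<in> K" for e x
  proof -
    have e_Ipar: "e \<in> Ipar" using e \<open>(1/2::real) ^ Suc M \<le> 1\<close> by (auto simp: Ipar_def)
    have M: "M \<le> dyadic_level (grid D (grid_index D e))"
      using e by (intro le_dyadic_level_grid_index[OF assms(3)]) auto
    have "norm (pderivs V \<alpha> (\<lambda>x. u e x - smoothed_net D u e x) x) \<le> e ^ dyadic_level (grid D (grid_index D e))"
      using M K x by (intro smoothing_error_bound[OF assms e_Ipar]) (auto simp: M_def)
    also have "\<dots> \<le> e ^ m" using e_Ipar M by (intro power_decreasing) (auto simp: Ipar_def M_def)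
    finally show ?thesis by simp
  qed
  ultimately show "\<exists>C \<eta>. 0 < \<eta> \<and> \<eta> \<le> 1 \<and>
      (\<forall>e\<in>{0<..\<eta>}. \<forall>x\<in>K. norm (pderivs V \<alpha> ((\<lambda>e x. u e x - smoothed_net D u e x) e) x) \<le> C * e ^ m)"
    by (intro exI[of _ 1] exI[of _ "(1/2) ^ Suc M"]) auto
qed

lemma moderate_if_negligible_diff:
  fixes u v :: "real \<Rightarrow> 'a::euclidean_space \<Rightarrow> 'k::real_normed_vector"
  assumes "open V" "co_net V u" "co_net V v" "moderate V u" "negligible_net V (\<lambda>e x. u e x - v e x)"
  shows "moderate V v"
  unfolding moderate_def
proof (intro allI impI)
  fix K :: "'a set" and \<alpha> :: "'a list"
  assume K: "compact K \<and> K \<subseteq> V \<and> set \<alpha> \<subseteq> Basis"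
  obtain N C \<eta> where \<eta>: "0 < \<eta>" "\<eta> \<le> 1" and
    bound_u: "\<And>e x. e \<in> {0<..\<eta>} \<Longrightarrow> x \<in> K \<Longrightarrow> norm (pderivs V \<alpha> (u e) x) \<le> C * (1 / e) ^ N"
    using assms(4)[unfolded moderate_def, rule_format, OF K] by blast
  obtain C' \<eta>' where \<eta>': "0 < \<eta>'" "\<eta>' \<le> 1" and
    bound_diff: "\<And>e x. e \<in> {0<..\<eta>'} \<Longrightarrow> x \<in> K \<Longrightarrow> norm (pderivs V \<alpha> (\<lambda>x. u e x - v e x) x) \<le> C' * e ^ 0"
    using assms(5)[unfolded negligible_net_def, rule_format, OF K, of 0] by blast
  have "norm (pderivs V \<alpha> (v e) x) \<le> (\<bar>C\<bar> + \<bar>C'\<bar>) * (1 / e) ^ N"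
    if e: "e \<in> {0<..min \<eta> \<eta>'}" and x: "x \<in> K" for e x
  proof -
    have e_Ipar: "e \<in> Ipar" using e \<eta> by (auto simp: Ipar_def)
    have one_le: "1 \<le> (1 / e) ^ N" using e_Ipar by (intro one_le_power) (auto simp: Ipar_def)
    have "norm (pderivs V \<alpha> (u e) x) \<le> C * (1 / e) ^ N" using e x by (intro bound_u) auto
    also have "\<dots> \<le> \<bar>C\<bar> * (1 / e) ^ N" using one_le by (intro mult_right_mono) auto
    finally have bound_u': "norm (pderivs V \<alpha> (u e) x) \<le> \<bar>C\<bar> * (1 / e) ^ N" .
    have "norm (pderivs V \<alpha> (\<lambda>x. u e x - v e x) x) \<le> C' * e ^ 0" using e x by (intro bound_diff) auto
    also have "\<dots> \<le> \<bar>C'\<bar> * 1" by simp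
    also have "\<dots> \<le> \<bar>C'\<bar> * (1 / e) ^ N" using one_le by (intro mult_left_mono) auto
    finally have bound_diff': "norm (pderivs V \<alpha> (\<lambda>x. u e x - v e x) x) \<le> \<bar>C'\<bar> * (1 / e) ^ N" .
    have "pderivs V \<alpha> (v e) x = pderivs V \<alpha> (u e) x - pderivs V \<alpha> (\<lambda>x. u e x - v e x) x"
      using pderivs_diff[OF assms(1) co_net_smooth_on_dom[OF assms(2) e_Ipar]
          co_net_smooth_on_dom[OF assms(3) e_Ipar], of \<alpha> x] K x by auto
    then have "norm (pderivs V \<alpha> (v e) x) \<le> norm (pderivs V \<alpha> (u e) x) + norm (pderivs V \<alpha> (\<lambda>x. u e x - v e x) x)"
      by (simp add: norm_triangle_ineq4)
    also have "\<dots> \<le> \<bar>C\<bar> * (1 / e) ^ N + \<bar>C'\<bar> * (1 / e) ^ N"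
      using bound_u' bound_diff' by (rule add_mono)
    finally show ?thesis by (simp add: algebra_simps)
  qed
  with \<eta> \<eta>' show "\<exists>N C \<eta>. 0 < \<eta> \<and> \<eta> \<le> 1 \<and> (\<forall>e\<in>{0<..\<eta>}. \<forall>x\<in>K. norm (pderivs V \<alpha> (v e) x) \<le> C * (1 / e) ^ N)"
    by (intro exI[of _ N] exI[of _ "\<bar>C\<bar> + \<bar>C'\<bar>"] exI[of _ "min \<eta> \<eta>'"]) auto
qed

lemma co_net_open_subset:
  fixes u :: "real \<Rightarrow> 'a::euclidean_space \<Rightarrow> 'k::real_normed_vector"
  assumes "open U1" "U1 \<subseteq> U" "open U" "co_net U u"
  shows "co_net U1 u"
  unfolding co_net_def
proof (intro conjI allI impI ballI)
  show "smooth_on_dom U1 (u e)" if "e \<in> Ipar" for e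
    using smooth_on_dom_open_subset[OF assms(1-3) co_net_smooth_on_dom[OF assms(4) that]] .
  fix \<alpha> :: "'a list" assume "set \<alpha> \<subseteq> Basis"
  then have "continuous_on (Ipar \<times> U1) (\<lambda>p. pderivs U \<alpha> (u (fst p)) (snd p))"
    using assms(2,4) unfolding co_net_def by (meson continuous_on_subset order_refl Sigma_mono)
  then show "continuous_on (Ipar \<times> U1) (\<lambda>p. pderivs U1 \<alpha> (u (fst p)) (snd p))"
    by (rule continuous_on_eq) (auto simp: pderivs_open_subset[OF assms(1-3)])
qed

lemma moderate_open_subset:
  fixes u :: "real \<Rightarrow> 'a::euclidean_space \<Rightarrow> 'k::real_normed_vector"
  assumes "open U1" "U1 \<subseteq> U" "open U" "moderate U u"
  shows "moderate U1 u"
  unfolding moderate_def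
proof (intro allI impI)
  fix K :: "'a set" and \<alpha> :: "'a list"
  assume K: "compact K \<and> K \<subseteq> U1 \<and> set \<alpha> \<subseteq> Basis"
  then have KU: "compact K \<and> K \<subseteq> U \<and> set \<alpha> \<subseteq> Basis" using assms(2) by blast
  obtain N C \<eta> where \<eta>: "0 < \<eta>" "\<eta> \<le> 1" and
    bound: "\<forall>e\<in>{0<..\<eta>}. \<forall>x\<in>K. norm (pderivs U \<alpha> (u e) x) \<le> C * (1 / e) ^ N"
    using assms(4)[unfolded moderate_def, rule_format, OF KU] by blast
  have "pderivs U1 \<alpha> (u e) x = pderivs U \<alpha> (u e) x" if "x \<in> K" for e x
  proof -
    have "x \<in> U1" using K that by blast
    then show ?thesis by (simp add: pderivs_open_subset[OF assms(1-3)])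
  qed
  with \<eta> bound show "\<exists>N C \<eta>. 0 < \<eta> \<and> \<eta> \<le> 1 \<and> (\<forall>e\<in>{0<..\<eta>}. \<forall>x\<in>K. norm (pderivs U1 \<alpha> (u e) x) \<le> C * (1 / e) ^ N)"
    by (intro exI[of _ N] exI[of _ C] exI[of _ \<eta>]) simp
qed

section \<open>Choice of the grid steps\<close>

lemma eventually_pderivs_oscillation_le:
  fixes u :: "real \<Rightarrow> 'a::euclidean_space \<Rightarrow> 'k::real_normed_vector"
  assumes "compact C" "C \<subseteq> U" "co_net U u" "set \<alpha> \<subseteq> Basis" "0 < a" "0 < \<epsilon>"
  shows "\<forall>\<^sub>F d in at_right 0. \<forall>e\<in>{a..1}. \<forall>e'\<in>{a..1}. \<forall>x\<in>C.
           \<bar>e - e'\<bar> \<le> d \<longrightarrow> norm (pderivs U \<alpha> (u e) x - pderivs U \<alpha> (u e') x) \<le> \<epsilon>"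
proof -
  have "continuous_on (Ipar \<times> U) (\<lambda>p. pderivs U \<alpha> (u (fst p)) (snd p))"
    using assms(3,4) unfolding co_net_def by blast
  moreover have "{a..1} \<times> C \<subseteq> Ipar \<times> U" using assms(2,5) by (auto simp: Ipar_def)
  ultimately have "uniformly_continuous_on ({a..1} \<times> C) (\<lambda>p. pderivs U \<alpha> (u (fst p)) (snd p))"
    using assms(1) by (intro compact_uniformly_continuous compact_Times) (auto elim: continuous_on_subset)
  then obtain \<delta> where \<delta>: "\<delta> > 0" "\<forall>p\<in>{a..1} \<times> C. \<forall>p'\<in>{a..1} \<times> C. dist p' p < \<delta> \<longrightarrow>
      dist (pderivs U \<alpha> (u (fst p')) (snd p')) (pderivs U \<alpha> (u (fst p)) (snd p)) < \<epsilon>"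
    unfolding uniformly_continuous_on_def using assms(6) by blast
  have "norm (pderivs U \<alpha> (u e) x - pderivs U \<alpha> (u e') x) \<le> \<epsilon>"
    if "e \<in> {a..1}" "e' \<in> {a..1}" "x \<in> C" "\<bar>e - e'\<bar> < \<delta>" for e e' x
    using \<delta>(2)[rule_format, of "(e', x)" "(e, x)"] that
    by (simp add: dist_Pair_Pair dist_real_def dist_norm)
  then show ?thesis
    unfolding eventually_at_right_field using \<delta>(1) by (intro exI[of _ \<delta>]) force
qed

lemma ex_admissible_steps_controlling_oscillation:
  fixes u :: "real \<Rightarrow> 'a::euclidean_space \<Rightarrow> 'k::real_normed_vector"
  assumes "open U1" "open U" "compact (closure U1)" "closure U1 \<subseteq> U" "co_net U u"
  shows "\<exists>D. admissible_steps D \<and> controls_oscillation U1 u D"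
proof -
  define osc where "osc k d \<longleftrightarrow>
    (\<forall>\<alpha>\<in>{\<alpha>. set \<alpha> \<subseteq> Basis \<and> length \<alpha> \<le> k}. \<forall>e\<in>{(1/2)^(k+2)..1}. \<forall>e'\<in>{(1/2)^(k+2)..1}. \<forall>x\<in>closure U1.
       \<bar>e - e'\<bar> \<le> d \<longrightarrow> norm (pderivs U \<alpha> (u e) x - pderivs U \<alpha> (u e') x) \<le> ((1/2)^(k+2)) ^ k)"
    for k :: nat and d :: real
  have ev_osc: "\<forall>\<^sub>F d in at_right 0. osc k d" for k
    unfolding osc_def using assms(3-5)
    by (intro eventually_ball_finite finite_lists_length_le[OF finite_Basis] ballI eventually_pderivs_oscillation_le) auto
  have ev_small: "\<forall>\<^sub>F d in at_right 0. 0 < d \<and> d \<le> (1/2::real) ^ (k + 2)" for k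
    unfolding eventually_at_right_field by (intro exI[of _ "(1/2::real) ^ (k + 2)"]) auto
  have "\<exists>d. (0 < d \<and> d \<le> (1/2::real) ^ (k + 2)) \<and> osc k d" for k
    using eventually_happens'[OF trivial_limit_at_right_real eventually_conj[OF ev_small ev_osc]] .
  then obtain D where D: "\<And>k. (0 < D k \<and> D k \<le> (1/2::real) ^ (k + 2)) \<and> osc k (D k)"
    by metis
  then have "admissible_steps D" by (simp add: admissible_steps_def)
  moreover have "controls_oscillation U1 u D"
    unfolding controls_oscillation_def
  proof (intro allI impI)
    fix k :: nat and \<alpha> :: "'a list" and e e' :: real and x :: 'a
    assume H: "set \<alpha> \<subseteq> Basis \<and> length \<alpha> \<le> k \<and> e \<in> {(1/2)^(k+2)..1} \<and> e' \<in> {(1/2)^(k+2)..1} \<and>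
      \<bar>e - e'\<bar> \<le> D k \<and> x \<in> U1"
    then have "norm (pderivs U \<alpha> (u e) x - pderivs U \<alpha> (u e') x) \<le> ((1/2)^(k+2)) ^ k"
      using D[of k] closure_subset unfolding osc_def by blast
    moreover have "U1 \<subseteq> U" "x \<in> U1" using assms(4) closure_subset H by blast+
    ultimately show "norm (pderivs U1 \<alpha> (u e) x - pderivs U1 \<alpha> (u e') x) \<le> ((1/2)^(k+2)) ^ k"
      by (simp add: pderivs_open_subset[OF assms(1) _ assms(2)])
  qed
  ultimately show ?thesis by blast
qed

theorem lemma3p8:
  fixes U U1 :: "'a::euclidean_space set"
    and u :: "real \<Rightarrow> 'a \<Rightarrow> 'k::{real_normed_field, banach}"
  assumes "open U" and "open U1" and "compact (closure U1)" and "closure U1 \<subseteq> U"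
    and "u \<in> EM_co U"
  shows "\<exists>v. v \<in> EM_sm U1 \<and> (\<lambda>\<epsilon> x. u \<epsilon> x - v \<epsilon> x) \<in> N_co U1"
proof -
  have "U1 \<subseteq> U" using assms(4) closure_subset by blast
  have u: "co_net U u" "moderate U u" using assms(5) by (auto simp: EM_co_def)
  then have u1: "co_net U1 u" "moderate U1 u"
    using co_net_open_subset moderate_open_subset assms(1,2) \<open>U1 \<subseteq> U\<close> by blast+
  obtain D where D: "admissible_steps D" "controls_oscillation U1 u D"
    using ex_admissible_steps_controlling_oscillation[OF assms(2,1,3,4) u(1)] by blast
  have v: "co_net U1 (smoothed_net D u)"
    using co_net_smoothed_net[OF assms(2) u1(1) D(1)] .
  have error: "negligible_net U1 (\<lambda>e x. u e x - smoothed_net D u e x)"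
    using negligible_net_smoothing_error[OF assms(2) u1(1) D] .
  have "smoothed_net D u \<in> EM_sm U1"
    unfolding EM_sm_def
    using v moderate_if_negligible_diff[OF assms(2) u1(1) v u1(2) error]
      smooth_on_dom_smoothed_net_Times[OF assms(2) u1(1) D(1)] by blast
  moreover have "(\<lambda>e x. u e x - smoothed_net D u e x) \<in> N_co U1"
    unfolding N_co_def using co_net_diff[OF assms(2) u1(1) v] error by blast
  ultimately show ?thesis by blast
qed

end
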